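(* Let $n \ge 2$ be an integer, let $1 \le \underline{x}_i < \bar{x}_i$ for $i \in \{1,2\}$, and let $\varepsilon \ge 2^{-2^{n-1}}$. Then for every $(x_1,x_2) \in [\underline{x}_1,\bar{x}_1] \times [\underline{x}_2,\bar{x}_2]$, the set of $\varepsilon$-feasible follower's solutions of the lower-level problem $$\max_{y \in \mathbb{R}^{n+2}} \; y_1 - y_n\,(x_1 + x_2 - y_{n+1} - y_{n+2})$$ subject to $y_1 + y_n = \tfrac12$, $y_i^2 \le y_{i+1}$ for $i \in \{1,\dots,n-1\}$, $y_i \ge 0$ for $i \in \{1,\dots,n\}$, $y_{n+1} \in [0,x_1]$, $y_{n+2} \in [-x_2,x_2]$, is not a singleton.
   Context: For $\varepsilon>0$, a point is $\varepsilon$-feasible for this lower-level problem if it satisfies all linear constraints ($y_1+y_n=\tfrac12$, $y_i\ge0$ for $i\le n$, the bounds on $y_{n+1},y_{n+2}$) exactly and satisfies $y_i^2 - y_{i+1} \le \varepsilon$ for all $i \in \{1,\dots,n-1\}$. An $\varepsilon$-feasible follower's solution (for given $x$) is an $\varepsilon$-feasible point that maximizes the lower-level objective over all $\varepsilon$-feasible points. *)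

theory Defs
  imports Complex_Main
begin

text \<open>Points y of R^(n+2) are represented as functions nat => real with
  support in {1..n+2} (components y 1, ..., y (n+2)).\<close>

definition ll_obj :: "nat \<Rightarrow> real \<Rightarrow> real \<Rightarrow> (nat \<Rightarrow> real) \<Rightarrow> real" where
  "ll_obj n x1 x2 y = y 1 - y n * (x1 + x2 - y (n+1) - y (n+2))"

definition eps_feasible :: "nat \<Rightarrow> real \<Rightarrow> real \<Rightarrow> real \<Rightarrow> (nat \<Rightarrow> real) \<Rightarrow> bool" where
  "eps_feasible n eps x1 x2 y \<longleftrightarrow>
     (\<forall>i. i \<notin> {1..n+2} \<longrightarrow> y i = 0) \<and>
     y 1 + y n = 1/2 \<and>
     (\<forall>i\<in>{1..n}. y i \<ge> 0) \<and>
     0 \<le> y (n+1) \<and> y (n+1) \<le> x1 \<and>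
     -x2 \<le> y (n+2) \<and> y (n+2) \<le> x2 \<and>
     (\<forall>i\<in>{1..n-1}. (y i)^2 - y (i+1) \<le> eps)"

definition eps_follower_solutions :: "nat \<Rightarrow> real \<Rightarrow> real \<Rightarrow> real \<Rightarrow> (nat \<Rightarrow> real) set" where
  "eps_follower_solutions n eps x1 x2 =
     {y. eps_feasible n eps x1 x2 y \<and>
         (\<forall>z. eps_feasible n eps x1 x2 z \<longrightarrow> ll_obj n x1 x2 z \<le> ll_obj n x1 x2 y)}"

end

theory Submission
  imports Defs
begin

text \<open>Put \<open>y(i) = (1/2)^(2^(i-1))\<close> for \<open>1 \<le> i < n\<close> and \<open>y(n) = 0\<close>. Each of these
  squares exactly into the next one, so the only inexact constraint is the last,
  \<open>y(n-1)^2 - y(n) = (1/2)^(2^(n-1)) \<le> \<epsilon>\<close>. Such a point has objective value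
  \<open>y(1) = 1/2\<close>, which is an upper bound because \<open>y(n) \<ge> 0\<close> and
  \<open>x1 + x2 - y(n+1) - y(n+2) \<ge> 0\<close>. As \<open>y(n) = 0\<close>, the component \<open>y(n+1)\<close> does not
  enter the objective and may be chosen freely in \<open>[0, x1]\<close>, so the optimum is not unique.\<close>

lemma ll_obj_le_half:
  assumes "eps_feasible n eps x1 x2 y"
  shows "ll_obj n x1 x2 y \<le> 1/2"
proof -
  have "y n \<ge> 0"
    using assms by (cases "n = 0") (auto simp: eps_feasible_def)
  moreover have "x1 + x2 - y (n+1) - y (n+2) \<ge> 0" and "y 1 + y n = 1/2"
    using assms by (auto simp: eps_feasible_def)
  ultimately show ?thesis
    unfolding ll_obj_def by (smt (verit) mult_nonneg_nonneg)
qed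

lemma eps_follower_solutionsI:
  assumes "eps_feasible n eps x1 x2 y" and "ll_obj n x1 x2 y = 1/2"
  shows "y \<in> eps_follower_solutions n eps x1 x2"
proof -
  have "ll_obj n x1 x2 z \<le> ll_obj n x1 x2 y" if "eps_feasible n eps x1 x2 z" for z
    using ll_obj_le_half[OF that] assms(2) by simp
  then show ?thesis
    using assms(1) unfolding eps_follower_solutions_def by blast
qed

definition half_tower_point :: "nat \<Rightarrow> real \<Rightarrow> nat \<Rightarrow> real" where
  "half_tower_point n a i =
     (if 1 \<le> i \<and> i < n then (1/2) ^ 2 ^ (i - 1) else if i = n + 1 then a else 0)"

lemma power_half_tower_square: "((1/2 :: real) ^ 2 ^ k)\<^sup>2 = (1/2) ^ 2 ^ Suc k"
  by (simp add: power_mult[symmetric] mult.commute)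

lemma half_tower_point_eps_feasible:
  assumes "n \<ge> 2" and eps: "(1/2) ^ 2 ^ (n - 1) \<le> eps"
    and "0 \<le> a" "a \<le> x1" "0 \<le> x2"
  shows "eps_feasible n eps x1 x2 (half_tower_point n a)"
  unfolding eps_feasible_def
proof (intro conjI ballI allI impI)
  fix i assume i: "i \<in> {1..n-1}"
  show "(half_tower_point n a i)\<^sup>2 - half_tower_point n a (i+1) \<le> eps"
  proof (cases "i + 1 = n")
    case True
    then have "(half_tower_point n a i)\<^sup>2 = (1/2) ^ 2 ^ (n - 1)"
      using i power_half_tower_square[of "i - 1"] by (simp add: half_tower_point_def flip: True)
    then show ?thesis using True eps by (simp add: half_tower_point_def)
  next
    case False
    have "0 \<le> eps" using eps order_trans[of 0 "(1/2) ^ 2 ^ (n - 1)" eps] by simp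
    moreover have "(half_tower_point n a i)\<^sup>2 = half_tower_point n a (i+1)"
      using i False power_half_tower_square[of "i - 1"] by (auto simp: half_tower_point_def)
    ultimately show ?thesis by simp
  qed
qed (use assms in \<open>auto simp: half_tower_point_def\<close>)

lemma ll_obj_half_tower_point: "n \<ge> 2 \<Longrightarrow> ll_obj n x1 x2 (half_tower_point n a) = 1/2"
  by (simp add: ll_obj_def half_tower_point_def)

theorem mainTheorem5:
  fixes n :: nat and xlo1 xhi1 xlo2 xhi2 eps x1 x2 :: real
  assumes "n \<ge> 2"
    and "1 \<le> xlo1" and "xlo1 < xhi1" and "1 \<le> xlo2" and "xlo2 < xhi2"
    and "eps \<ge> 1 / 2 ^ (2 ^ (n - 1))"
    and "x1 \<in> {xlo1..xhi1}" and "x2 \<in> {xlo2..xhi2}"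
  shows "\<not> (\<exists>y. eps_follower_solutions n eps x1 x2 = {y})"
proof
  assume "\<exists>y. eps_follower_solutions n eps x1 x2 = {y}"
  then obtain y where unique: "eps_follower_solutions n eps x1 x2 = {y}" ..
  have "0 \<le> x1" using assms by simp
  have "half_tower_point n a = y" if "0 \<le> a" "a \<le> x1" for a
  proof -
    have "half_tower_point n a \<in> eps_follower_solutions n eps x1 x2"
      using assms that
      by (intro eps_follower_solutionsI half_tower_point_eps_feasible ll_obj_half_tower_point)
         (auto simp: power_one_over)
    then show ?thesis using unique by simp
  qed
  then have "half_tower_point n 0 (n + 1) = half_tower_point n x1 (n + 1)"
    using \<open>0 \<le> x1\<close> by simp
  then show False
    using assms by (simp add: half_tower_point_def)
qed

end
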